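(* Let $(X,d)$ be a metric space of bounded geometry and let $f:X\times\mathbb{R}^N\to\mathbb{R}^N$ be a continuous map such that: (1) $f|_{X\times\{w\}}$ is 1-Lipschitz for every $w\in\mathbb{R}^N$; (2) $f|_{\{x\}\times\mathbb{R}^N}:\mathbb{R}^N\to\mathbb{R}^N$ is proper and essential for every $x\in X$; (3) there is a function $c(r)$ such that $\operatorname{diam}_d\big(f^{-1}(B_r(0))\cap(X\times\{w\})\big)\le c(r)$ for all $w\in\mathbb{R}^N$ and $r>0$. Then no expander admits a coarse quasi-embedding into $X$.
   Context: A proper map $g:\mathbb{R}^N\to\mathbb{R}^N$ is essential if it induces a nonzero map on $H^N_c(\mathbb{R}^N;\mathbb{Q})$ (nonzero degree). Finite graphs are identified with their vertex sets with the edge-length-1 path metric; for $A\subset X$, $\partial A=\{x:\operatorname{dist}(x,A)=1\}$. An expander (conductance $c>0$, degree $d$) is a sequence of finite $d$-regular graphs $\{X_n\}$ with $|X_n|\to\infty$ and $|\partial A|\ge c|A|$ for all $A\subset X_n$ with $|A|\le|X_n|/2$. A coarse quasi-embedding of $\{X_n\}$ into a metric space $X$ is a sequence of 1-Lipschitz maps $\xi_n:X_n\to X$ together with a function $\rho:\mathbb{R}_+^2\to\mathbb{R}_+$ with $\lim_{t\to\infty}\rho(r,t)/t=0$ for every $r$, such that $|\xi_n^{-1}(B_r(x))|<\rho(r,|X_n|)$ for all $n$, all $r$ and all $x\in X$. *)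

theory Defs
  imports "HOL-Analysis.Analysis" "HOL-Homology.Homology"
begin

definition bounded_geometry :: "'a::metric_space set \<Rightarrow> bool" where
  "bounded_geometry X \<longleftrightarrow>
     (\<exists>\<epsilon>>0. \<forall>R>0. \<exists>N::nat. \<forall>x\<in>X. \<exists>C. finite C \<and> card C \<le> N \<and> C \<subseteq> X \<and>
        ball x R \<inter> X \<subseteq> (\<Union>c\<in>C. ball c \<epsilon>))"

text \<open>Essential proper map of R^N (N = CARD('n)): nonzero degree, expressed via the
  induced map on top relative homology at infinity
  H_N(R^N, R^N - cball 0 S) -> H_N(R^N, R^N - cball 0 R), where g^-1(cball 0 R) is
  contained in cball 0 S.\<close>
definition essential :: "(real^'n \<Rightarrow> real^'n) \<Rightarrow> bool" where
  "essential g \<longleftrightarrow>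
     (\<exists>R S. R > 0 \<and> g -` cball 0 R \<subseteq> cball 0 S \<and>
        (\<exists>c \<in> carrier (relative_homology_group (int CARD('n)) euclidean (- cball 0 S)).
           hom_induced (int CARD('n)) euclidean (- cball 0 S) euclidean (- cball 0 R) g c
             \<noteq> \<one>\<^bsub>relative_homology_group (int CARD('n)) euclidean (- cball 0 R)\<^esub>))"

definition graph_dist :: "'v set \<Rightarrow> ('v \<Rightarrow> 'v \<Rightarrow> bool) \<Rightarrow> 'v \<Rightarrow> 'v \<Rightarrow> real" where
  "graph_dist V E u v = real (LEAST k. \<exists>p::nat \<Rightarrow> 'v. p 0 = u \<and> p k = v \<and> p k \<in> V \<and>
        (\<forall>i<k. p i \<in> V \<and> E (p i) (p (Suc i))))"

definition graph_boundary :: "'v set \<Rightarrow> ('v \<Rightarrow> 'v \<Rightarrow> bool) \<Rightarrow> 'v set \<Rightarrow> 'v set" where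
  "graph_boundary V E A = {x \<in> V. graph_dist V E x ` A \<noteq> {} \<and> Inf (graph_dist V E x ` A) = 1}"

definition expander :: "(nat \<Rightarrow> 'v set) \<Rightarrow> (nat \<Rightarrow> 'v \<Rightarrow> 'v \<Rightarrow> bool) \<Rightarrow> real \<Rightarrow> nat \<Rightarrow> bool" where
  "expander V E c d \<longleftrightarrow> c > 0 \<and>
     (\<forall>n. finite (V n) \<and> (\<forall>u v. E n u v \<longrightarrow> u \<in> V n \<and> v \<in> V n \<and> E n v u \<and> u \<noteq> v) \<and>
          (\<forall>v\<in>V n. card {u \<in> V n. E n v u} = d) \<and>
          (\<forall>A \<subseteq> V n. real (card A) \<le> real (card (V n)) / 2 \<longrightarrow>
              real (card (graph_boundary (V n) (E n) A)) \<ge> c * real (card A))) \<and>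
     filterlim (\<lambda>n. card (V n)) at_top sequentially"

definition coarse_quasi_embedding ::
  "(nat \<Rightarrow> 'v set) \<Rightarrow> (nat \<Rightarrow> 'v \<Rightarrow> 'v \<Rightarrow> bool) \<Rightarrow> 'a::metric_space set \<Rightarrow> (nat \<Rightarrow> 'v \<Rightarrow> 'a) \<Rightarrow> bool" where
  "coarse_quasi_embedding V E X \<xi> \<longleftrightarrow>
     (\<forall>n. \<xi> n ` V n \<subseteq> X \<and>
          (\<forall>u\<in>V n. \<forall>v\<in>V n. dist (\<xi> n u) (\<xi> n v) \<le> graph_dist (V n) (E n) u v)) \<and>
     (\<exists>\<rho>::real \<Rightarrow> real \<Rightarrow> real.
        (\<forall>r>0. \<forall>t>0. \<rho> r t \<ge> 0) \<and>
        (\<forall>r>0. ((\<lambda>t. \<rho> r t / t) \<longlongrightarrow> 0) at_top) \<and>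
        (\<forall>n. \<forall>r>0. \<forall>x\<in>X. real (card {v \<in> V n. \<xi> n v \<in> ball x r}) < \<rho> r (real (card (V n)))))"

end

theory Submission
  imports Defs
begin

text \<open>Suppose the graphs \<open>X\<^sub>n\<close> of an expander map to \<open>X\<close> by \<open>\<xi>\<^sub>n\<close>. The average over the
  vertices \<open>v\<close> of the maps \<open>f (\<xi>\<^sub>n v)\<close> stays at bounded distance from the proper essential
  map \<open>f x\<^sub>0\<close>, so it has a zero \<open>w\<close>. The coordinates of \<open>v \<mapsto> f (\<xi>\<^sub>n v) w\<close> then have mean
  zero and change by at most 1 along edges, and the L1 Poincare inequality of an expander
  (a layer-cake argument around a median) bounds their total absolute value by \<open>O(|X\<^sub>n|)\<close>.
  By Markov's inequality more than half of the vertices are sent by \<open>f (\<cdot>) w\<close> into a fixed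
  ball \<open>B\<^sub>r(0)\<close>, hence into a set of diameter \<open>c(r)\<close>; this contradicts the sublinear bound
  on the number of vertices mapped into a ball.\<close>

section \<open>Expansion and the L1 Poincare inequality\<close>

lemma le_sum_of_bool_less:
  fixes t :: real
  shows "0 \<le> t \<Longrightarrow> t \<le> real K \<Longrightarrow> t \<le> (\<Sum>k<K. of_bool (real k < t))"
proof (induction K)
  case 0
  then show ?case by simp
next
  case (Suc K)
  show ?case
  proof (cases "t \<le> real K")
    case True
    then show ?thesis using Suc by simp
  next
    case False
    then have "(\<Sum>k<Suc K. of_bool (real k < t)) = (\<Sum>k<Suc K. (1::real))"
      by (intro sum.cong) auto
    then show ?thesis using Suc.prems by simp
  qed
qed

lemma layer_cake_le:
  fixes t :: "'v \<Rightarrow> real"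
  assumes "finite V" and "\<And>v. v \<in> V \<Longrightarrow> t v \<le> real K"
  shows "(\<Sum>v\<in>V. max 0 (t v)) \<le> (\<Sum>k<K. real (card {v\<in>V. real k < t v}))"
proof -
  have "(\<Sum>v\<in>V. max 0 (t v)) \<le> (\<Sum>v\<in>V. \<Sum>k<K. of_bool (real k < max 0 (t v)))"
    using assms(2) by (intro sum_mono le_sum_of_bool_less) auto
  also have "\<dots> = (\<Sum>k<K. \<Sum>v\<in>V. of_bool (real k < t v))"
    by (subst sum.swap) (simp add: less_max_iff_disj)
  also have "\<dots> = (\<Sum>k<K. real (card {v\<in>V. real k < t v}))"
    using assms(1) by (simp add: sum_of_bool_eq Int_def)
  finally show ?thesis .
qed

lemma sublevel_less_eq_sublevel_le_Max:
  fixes h :: "'v \<Rightarrow> real"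
  assumes "finite V" and "{v\<in>V. h v < a} \<noteq> {}"
  shows "Max (h ` {v\<in>V. h v < a}) < a"
    and "{v\<in>V. h v < a} = {v\<in>V. h v \<le> Max (h ` {v\<in>V. h v < a})}"
proof -
  have fin: "finite (h ` {v\<in>V. h v < a})" using assms(1) by simp
  have "Max (h ` {v\<in>V. h v < a}) \<in> h ` {v\<in>V. h v < a}"
    using fin assms(2) by (intro Max_in) auto
  then show less: "Max (h ` {v\<in>V. h v < a}) < a" by auto
  show "{v\<in>V. h v < a} = {v\<in>V. h v \<le> Max (h ` {v\<in>V. h v < a})}"
  proof
    show "{v\<in>V. h v < a} \<subseteq> {v\<in>V. h v \<le> Max (h ` {v\<in>V. h v < a})}"
      using fin by auto
    show "{v\<in>V. h v \<le> Max (h ` {v\<in>V. h v < a})} \<subseteq> {v\<in>V. h v < a}"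
      using less by auto
  qed
qed

lemma exists_least_half_level:
  fixes h :: "'v \<Rightarrow> real"
  assumes "finite V" and "V \<noteq> {}"
  obtains a where "real (card V) / 2 \<le> real (card {v\<in>V. h v \<le> a})"
    and "\<And>b. b \<in> h ` V \<Longrightarrow> b < a \<Longrightarrow> real (card {v\<in>V. h v \<le> b}) < real (card V) / 2"
proof -
  define Hs where "Hs = {b \<in> h ` V. real (card V) / 2 \<le> real (card {v\<in>V. h v \<le> b})}"
  have "finite Hs" using assms(1) by (simp add: Hs_def)
  have "{v\<in>V. h v \<le> Max (h ` V)} = V" using assms(1) by auto
  then have "Max (h ` V) \<in> Hs" using assms by (simp add: Hs_def)
  then have "Min Hs \<in> Hs" using \<open>finite Hs\<close> by (intro Min_in) auto
  show ?thesis
  proof (rule that)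
    show "real (card V) / 2 \<le> real (card {v\<in>V. h v \<le> Min Hs})"
      using \<open>Min Hs \<in> Hs\<close> by (simp add: Hs_def)
    show "real (card {v\<in>V. h v \<le> b}) < real (card V) / 2" if "b \<in> h ` V" and "b < Min Hs" for b
    proof (rule ccontr)
      assume "\<not> ?thesis"
      then have "b \<in> Hs" using that(1) by (simp add: Hs_def not_less)
      then have "Min Hs \<le> b" using \<open>finite Hs\<close> by simp
      with that(2) show False by simp
    qed
  qed
qed

lemma exists_median:
  fixes h :: "'v \<Rightarrow> real"
  assumes fin: "finite V"
  shows "\<exists>a. real (card {v\<in>V. h v < a}) \<le> real (card V) / 2 \<and>
             real (card {v\<in>V. a < h v}) \<le> real (card V) / 2"
proof (cases "V = {}")
  case True
  then show ?thesis by simp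
next
  case False
  obtain a where half: "real (card V) / 2 \<le> real (card {v\<in>V. h v \<le> a})"
    and least: "\<And>b. b \<in> h ` V \<Longrightarrow> b < a \<Longrightarrow> real (card {v\<in>V. h v \<le> b}) < real (card V) / 2"
    using exists_least_half_level[OF fin False] by blast
  have "{v\<in>V. a < h v} = V - {v\<in>V. h v \<le> a}" by auto
  then have "card {v\<in>V. a < h v} = card V - card {v\<in>V. h v \<le> a}"
    using fin by (simp add: card_Diff_subset)
  moreover have "card {v\<in>V. h v \<le> a} \<le> card V" using fin by (intro card_mono) auto
  ultimately have above: "real (card {v\<in>V. a < h v}) \<le> real (card V) / 2"
    using half by (simp add: of_nat_diff)
  have "real (card {v\<in>V. h v < a}) \<le> real (card V) / 2"
  proof (cases "{v\<in>V. h v < a} = {}")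
    case True
    then show ?thesis by (simp only: True card.empty)
  next
    case False
    let ?b = "Max (h ` {v\<in>V. h v < a})"
    have "?b \<in> h ` {v\<in>V. h v < a}" using fin False by (intro Max_in) auto
    then have "?b \<in> h ` V" by auto
    then show ?thesis
      using least[of ?b] sublevel_less_eq_sublevel_le_Max[OF fin False] by simp
  qed
  with above show ?thesis by blast
qed

lemma sum_abs_le_twice_sum_abs_diff:
  fixes h :: "'v \<Rightarrow> real"
  assumes "sum h V = 0"
  shows "(\<Sum>v\<in>V. \<bar>h v\<bar>) \<le> 2 * (\<Sum>v\<in>V. \<bar>h v - a\<bar>)"
proof -
  have "real (card V) * \<bar>a\<bar> = \<bar>\<Sum>v\<in>V. h v - a\<bar>"
    using assms by (simp add: sum_subtractf abs_mult)
  also have "\<dots> \<le> (\<Sum>v\<in>V. \<bar>h v - a\<bar>)" by (rule sum_abs)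
  finally have mean: "real (card V) * \<bar>a\<bar> \<le> (\<Sum>v\<in>V. \<bar>h v - a\<bar>)" .
  have "(\<Sum>v\<in>V. \<bar>h v\<bar>) \<le> (\<Sum>v\<in>V. \<bar>h v - a\<bar> + \<bar>a\<bar>)"
    by (intro sum_mono) linarith
  also have "\<dots> = (\<Sum>v\<in>V. \<bar>h v - a\<bar>) + real (card V) * \<bar>a\<bar>"
    by (simp add: sum.distrib)
  finally show ?thesis using mean by linarith
qed

lemma card_ge_mult_le_sum:
  fixes g :: "'v \<Rightarrow> real"
  assumes "finite V" and "\<And>v. v \<in> V \<Longrightarrow> 0 \<le> g v"
  shows "r * real (card {v\<in>V. r \<le> g v}) \<le> (\<Sum>v\<in>V. g v)"
proof -
  have "r * real (card {v\<in>V. r \<le> g v}) = (\<Sum>v\<in>{v\<in>V. r \<le> g v}. r)" by simp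
  also have "\<dots> \<le> (\<Sum>v\<in>{v\<in>V. r \<le> g v}. g v)" by (intro sum_mono) simp
  also have "\<dots> \<le> (\<Sum>v\<in>V. g v)" using assms by (intro sum_mono2) auto
  finally show ?thesis .
qed

definition boundary_lipschitz :: "'v set \<Rightarrow> ('v set \<Rightarrow> 'v set) \<Rightarrow> ('v \<Rightarrow> 'b::metric_space) \<Rightarrow> bool"
  where "boundary_lipschitz V bd h \<longleftrightarrow> (\<forall>A\<subseteq>V. \<forall>x\<in>bd A. \<exists>y\<in>A. dist (h x) (h y) \<le> 1)"

lemma boundary_lipschitzD:
  "boundary_lipschitz V bd h \<Longrightarrow> A \<subseteq> V \<Longrightarrow> x \<in> bd A \<Longrightarrow> \<exists>y\<in>A. dist (h x) (h y) \<le> 1"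
  by (simp add: boundary_lipschitz_def)

locale vertex_expansion =
  fixes V :: "'v set" and bd :: "'v set \<Rightarrow> 'v set" and c :: real
  assumes finite_V: "finite V" and c_pos: "0 < c"
    and boundary_disjoint: "A \<subseteq> V \<Longrightarrow> bd A \<subseteq> V - A"
    and expansion: "A \<subseteq> V \<Longrightarrow> real (card A) \<le> real (card V) / 2 \<Longrightarrow>
                     c * real (card A) \<le> real (card (bd A))"
begin

lemma card_sublevel_expand:
  fixes h :: "'v \<Rightarrow> real"
  assumes lip: "boundary_lipschitz V bd h"
    and half: "real (card {v\<in>V. h v < b}) \<le> real (card V) / 2"
  shows "(1 + c) * real (card {v\<in>V. h v < b}) \<le> real (card {v\<in>V. h v < b + 1})"
proof -
  let ?A = "{v\<in>V. h v < b}" and ?B = "{v\<in>V. h v < b + 1}"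
  have bd_sub: "bd ?A \<subseteq> ?B - ?A"
  proof
    fix x assume x: "x \<in> bd ?A"
    have "?A \<subseteq> V" by blast
    then have "x \<in> V - ?A" using boundary_disjoint x by blast
    moreover obtain y where "y \<in> ?A" "dist (h x) (h y) \<le> 1"
      using boundary_lipschitzD[OF lip \<open>?A \<subseteq> V\<close> x] by blast
    ultimately show "x \<in> ?B - ?A" by (auto simp: dist_real_def)
  qed
  have fin: "finite ?A" "finite ?B" using finite_V by simp_all
  then have "finite (bd ?A)" using bd_sub finite_subset by blast
  then have "card ?A + card (bd ?A) = card (?A \<union> bd ?A)"
    using bd_sub fin by (intro card_Un_disjoint[symmetric]) auto
  also have "\<dots> \<le> card ?B"
    using bd_sub fin by (intro card_mono) auto
  finally have "card ?A + card (bd ?A) \<le> card ?B" .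
  moreover have "c * real (card ?A) \<le> real (card (bd ?A))"
    using expansion half by auto
  ultimately show ?thesis by (simp add: algebra_simps)
qed

lemma card_sublevel_geometric:
  fixes h :: "'v \<Rightarrow> real"
  assumes lip: "boundary_lipschitz V bd h"
    and half: "real (card {v\<in>V. h v < a}) \<le> real (card V) / 2"
  shows "real (card {v\<in>V. h v < a - real k}) * (1 + c) ^ k \<le> real (card V) / 2"
proof (induction k)
  case 0
  then show ?case using half by simp
next
  case (Suc k)
  have "card {v\<in>V. h v < a - real (Suc k)} \<le> card {v\<in>V. h v < a}"
    using finite_V by (intro card_mono) auto
  then have "(1 + c) * real (card {v\<in>V. h v < a - real (Suc k)})
      \<le> real (card {v\<in>V. h v < a - real (Suc k) + 1})"
    using half by (intro card_sublevel_expand[OF lip]) linarith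
  also have "\<dots> = real (card {v\<in>V. h v < a - real k})" by (simp add: algebra_simps)
  finally have "real (card {v\<in>V. h v < a - real (Suc k)}) * (1 + c) * (1 + c) ^ k
      \<le> real (card {v\<in>V. h v < a - real k}) * (1 + c) ^ k"
    using c_pos by (intro mult_right_mono) (simp_all add: mult.commute)
  moreover have "real (card {v\<in>V. h v < a - real (Suc k)}) * (1 + c) ^ Suc k
      = real (card {v\<in>V. h v < a - real (Suc k)}) * (1 + c) * (1 + c) ^ k"
    by (simp only: power_Suc mult.assoc)
  ultimately show ?case using Suc.IH by linarith
qed

lemma sum_deficit_le:
  fixes h :: "'v \<Rightarrow> real"
  assumes lip: "boundary_lipschitz V bd h"
    and half: "real (card {v\<in>V. h v < a}) \<le> real (card V) / 2"
  shows "(\<Sum>v\<in>V. max 0 (a - h v)) \<le> real (card V) / 2 * ((1 + c) / c)"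
proof -
  define q where "q = 1 / (1 + c)"
  have q: "0 < q" "q < 1" using c_pos by (auto simp: q_def)
  define K where "K = nat \<lceil>\<Sum>v\<in>V. max 0 (a - h v)\<rceil>"
  have "max 0 (a - h v) \<le> real K" if "v \<in> V" for v
  proof -
    have "max 0 (a - h v) \<le> (\<Sum>v\<in>V. max 0 (a - h v))"
      using that finite_V by (intro member_le_sum) auto
    then show ?thesis unfolding K_def by linarith
  qed
  then have "(\<Sum>v\<in>V. max 0 (a - h v)) \<le> (\<Sum>k<K. real (card {v\<in>V. real k < a - h v}))"
    using finite_V by (intro layer_cake_le) auto
  also have "\<dots> \<le> (\<Sum>k<K. real (card V) / 2 * q ^ k)"
  proof (intro sum_mono)
    fix k
    have "{v\<in>V. real k < a - h v} = {v\<in>V. h v < a - real k}" by auto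
    moreover have "real (card {v\<in>V. h v < a - real k}) \<le> real (card V) / 2 / (1 + c) ^ k"
      using card_sublevel_geometric[OF lip half, of k] c_pos by (subst pos_le_divide_eq) auto
    ultimately show "real (card {v\<in>V. real k < a - h v}) \<le> real (card V) / 2 * q ^ k"
      by (simp add: q_def power_one_over)
  qed
  also have "\<dots> = real (card V) / 2 * ((1 - q ^ K) / (1 - q))"
    unfolding sum_distrib_left[symmetric] using q by (simp add: sum_gp_strict)
  also have "\<dots> \<le> real (card V) / 2 * (1 / (1 - q))"
    using q by (intro mult_left_mono divide_right_mono) auto
  also have "1 / (1 - q) = (1 + c) / c" using c_pos by (simp add: q_def field_simps)
  finally show ?thesis .
qed

lemma sum_abs_diff_median_le:
  fixes h :: "'v \<Rightarrow> real"
  assumes lip: "boundary_lipschitz V bd h"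
    and below: "real (card {v\<in>V. h v < a}) \<le> real (card V) / 2"
    and above: "real (card {v\<in>V. a < h v}) \<le> real (card V) / 2"
  shows "(\<Sum>v\<in>V. \<bar>h v - a\<bar>) \<le> real (card V) * ((1 + c) / c)"
proof -
  have "boundary_lipschitz V bd (\<lambda>v. - h v)"
    using lip by (simp add: boundary_lipschitz_def dist_minus)
  moreover have "{v\<in>V. - h v < - a} = {v\<in>V. a < h v}" by auto
  ultimately have "(\<Sum>v\<in>V. max 0 (- a - - h v)) \<le> real (card V) / 2 * ((1 + c) / c)"
    using above by (intro sum_deficit_le) auto
  moreover have "(\<Sum>v\<in>V. max 0 (a - h v)) \<le> real (card V) / 2 * ((1 + c) / c)"
    using lip below by (rule sum_deficit_le)
  moreover have "(\<Sum>v\<in>V. \<bar>h v - a\<bar>) = (\<Sum>v\<in>V. max 0 (a - h v)) + (\<Sum>v\<in>V. max 0 (- a - - h v))"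
    by (subst sum.distrib[symmetric]) (intro sum.cong; auto)
  ultimately have "(\<Sum>v\<in>V. \<bar>h v - a\<bar>) \<le> 2 * (real (card V) / 2 * ((1 + c) / c))"
    by linarith
  then show ?thesis by simp
qed

lemma sum_abs_le_of_sum_eq_0:
  fixes h :: "'v \<Rightarrow> real"
  assumes "boundary_lipschitz V bd h" and "sum h V = 0"
  shows "(\<Sum>v\<in>V. \<bar>h v\<bar>) \<le> 2 * real (card V) * ((1 + c) / c)"
proof -
  obtain a where "real (card {v\<in>V. h v < a}) \<le> real (card V) / 2"
    and "real (card {v\<in>V. a < h v}) \<le> real (card V) / 2"
    using exists_median[OF finite_V] by blast
  then have "(\<Sum>v\<in>V. \<bar>h v - a\<bar>) \<le> real (card V) * ((1 + c) / c)"
    by (rule sum_abs_diff_median_le[OF assms(1)])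
  then show ?thesis using sum_abs_le_twice_sum_abs_diff[OF assms(2), of a] by simp
qed

lemma sum_norm_le_of_sum_eq_0:
  fixes \<phi> :: "'v \<Rightarrow> real^'n"
  assumes lip: "boundary_lipschitz V bd \<phi>" and sum0: "sum \<phi> V = 0"
  shows "(\<Sum>v\<in>V. norm (\<phi> v)) \<le> 2 * real CARD('n) * real (card V) * ((1 + c) / c)"
proof -
  have coord: "(\<Sum>v\<in>V. \<bar>\<phi> v $ i\<bar>) \<le> 2 * real (card V) * ((1 + c) / c)" for i
  proof (rule sum_abs_le_of_sum_eq_0)
    show "boundary_lipschitz V bd (\<lambda>v. \<phi> v $ i)"
      using lip unfolding boundary_lipschitz_def by (meson dist_vec_nth_le order_trans)
    show "(\<Sum>v\<in>V. \<phi> v $ i) = 0" using sum0 by (simp flip: sum_component)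
  qed
  have "(\<Sum>v\<in>V. norm (\<phi> v)) \<le> (\<Sum>v\<in>V. \<Sum>i\<in>UNIV. \<bar>\<phi> v $ i\<bar>)"
    by (intro sum_mono norm_le_l1_cart)
  also have "\<dots> = (\<Sum>i\<in>UNIV. \<Sum>v\<in>V. \<bar>\<phi> v $ i\<bar>)" by (rule sum.swap)
  also have "\<dots> \<le> (\<Sum>i\<in>(UNIV::'n set). 2 * real (card V) * ((1 + c) / c))"
    by (intro sum_mono coord)
  finally show ?thesis by (simp add: field_simps)
qed

lemma card_small_norm_gt_half:
  fixes \<phi> :: "'v \<Rightarrow> real^'n"
  assumes lip: "boundary_lipschitz V bd \<phi>" and sum0: "sum \<phi> V = 0" and "V \<noteq> {}"
    and r: "4 * real CARD('n) * ((1 + c) / c) < r"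
  shows "real (card V) / 2 < real (card {v\<in>V. norm (\<phi> v) < r})"
proof -
  let ?M = "real (card V)" and ?bad = "{v\<in>V. r \<le> norm (\<phi> v)}"
  have M: "0 < ?M" using finite_V \<open>V \<noteq> {}\<close> by (simp add: card_gt_0_iff)
  have "0 < 4 * real CARD('n) * ((1 + c) / c)" using c_pos by simp
  then have r0: "0 < r" using r by linarith
  have "r * real (card ?bad) \<le> 2 * real CARD('n) * ?M * ((1 + c) / c)"
    using card_ge_mult_le_sum[OF finite_V, of "\<lambda>v. norm (\<phi> v)" r]
      sum_norm_le_of_sum_eq_0[OF lip sum0] by simp
  also have "\<dots> = 4 * real CARD('n) * ((1 + c) / c) * (?M / 2)" by simp
  also have "\<dots> < r * (?M / 2)" using r M by (intro mult_strict_right_mono) auto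
  finally have bad: "real (card ?bad) < ?M / 2" using r0 by simp
  have "{v\<in>V. norm (\<phi> v) < r} = V - ?bad" by auto
  then have "card {v\<in>V. norm (\<phi> v) < r} = card V - card ?bad"
    using finite_V by (simp add: card_Diff_subset)
  moreover have "card ?bad \<le> card V" using finite_V by (intro card_mono) auto
  ultimately show ?thesis using bad by (simp add: of_nat_diff)
qed

end

section \<open>Graph distance and vertex boundary\<close>

lemma graph_dist_self:
  fixes x :: 'v
  assumes "x \<in> V"
  shows "graph_dist V E x x = 0"
proof -
  have "(LEAST k. \<exists>p::nat \<Rightarrow> 'v. p 0 = x \<and> p k = x \<and> p k \<in> V \<and>
        (\<forall>i<k. p i \<in> V \<and> E (p i) (p (Suc i)))) \<le> 0"
    by (rule Least_le) (rule exI[of _ "\<lambda>_. x"], use assms in simp)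
  then show ?thesis unfolding graph_dist_def by simp
qed

lemma graph_boundaryD:
  assumes "finite V" and "A \<subseteq> V" and x: "x \<in> graph_boundary V E A"
  shows "x \<in> V - A" and "\<exists>y\<in>A. graph_dist V E x y = 1"
proof -
  let ?D = "graph_dist V E x ` A"
  have "x \<in> V" and "?D \<noteq> {}" and Inf: "Inf ?D = 1"
    using x by (auto simp: graph_boundary_def)
  have "finite ?D" using assms(1,2) finite_subset by blast
  then have Min: "Min ?D = 1" using Inf \<open>?D \<noteq> {}\<close> by (simp add: cInf_eq_Min)
  then show "\<exists>y\<in>A. graph_dist V E x y = 1"
    using Min_in[OF \<open>finite ?D\<close> \<open>?D \<noteq> {}\<close>] by auto
  have "x \<notin> A"
  proof
    assume "x \<in> A"
    then have "Min ?D \<le> 0"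
      using \<open>finite ?D\<close> graph_dist_self[OF \<open>x \<in> V\<close>] by (metis Min_le image_eqI)
    with Min show False by simp
  qed
  with \<open>x \<in> V\<close> show "x \<in> V - A" by blast
qed

lemma expander_vertex_expansion:
  assumes "expander V E c d"
  shows "vertex_expansion (V n) (graph_boundary (V n) (E n)) c"
proof
  show "finite (V n)" and "0 < c" using assms by (auto simp: expander_def)
  show "graph_boundary (V n) (E n) A \<subseteq> V n - A" if "A \<subseteq> V n" for A
    using graph_boundaryD(1)[OF \<open>finite (V n)\<close> that] by blast
  show "c * real (card A) \<le> real (card (graph_boundary (V n) (E n) A))"
    if "A \<subseteq> V n" and "real (card A) \<le> real (card (V n)) / 2" for A
    using assms that by (auto simp: expander_def)
qed

lemma boundary_lipschitz_graph_boundary: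
  assumes "finite V"
    and "\<And>u v. u \<in> V \<Longrightarrow> v \<in> V \<Longrightarrow> dist (\<phi> u) (\<phi> v) \<le> graph_dist V E u v"
  shows "boundary_lipschitz V (graph_boundary V E) \<phi>"
  unfolding boundary_lipschitz_def
proof (intro allI impI ballI)
  fix A x assume A: "A \<subseteq> V" and x: "x \<in> graph_boundary V E A"
  obtain y where "y \<in> A" and "graph_dist V E x y = 1"
    using graph_boundaryD(2)[OF assms(1) A x] by blast
  moreover have "x \<in> V" using graph_boundaryD(1)[OF assms(1) A x] by blast
  ultimately show "\<exists>y\<in>A. dist (\<phi> x) (\<phi> y) \<le> 1" using A assms(2) by force
qed

section \<open>Zeros of perturbations of essential maps\<close>

lemma homotopic_with_euclideanI:
  fixes h :: "real \<times> 'a::real_normed_vector \<Rightarrow> 'b::real_normed_vector"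
  assumes "continuous_on ({0..1} \<times> UNIV) h"
    and "\<And>x. h (0, x) = f x" and "\<And>x. h (1, x) = g x"
    and "\<And>t. t \<in> {0..1} \<Longrightarrow> P (\<lambda>x. h (t, x))"
  shows "homotopic_with P euclidean euclidean f g"
  unfolding homotopic_with_def
proof (intro exI conjI allI ballI)
  have "prod_topology (top_of_set {0..1::real}) (euclidean::'a topology) = top_of_set ({0..1::real} \<times> UNIV)"
    using subtopology_Times[of euclidean euclidean "{0..1::real}" "UNIV::'a set"]
    by (simp add: euclidean_product_topology)
  then show "continuous_map (prod_topology (top_of_set {0..1}) euclidean) euclidean h"
    using assms(1) by (simp add: continuous_map_iff_continuous)
qed (use assms in auto)

text \<open>The map factors through the pair \<open>(T, T)\<close>, whose relative homology vanishes.\<close>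
lemma hom_induced_range_subset_eq_one:
  fixes k :: "'a::topological_space \<Rightarrow> 'b::topological_space"
  assumes k_cont: "continuous_on UNIV k" and k_range: "range k \<subseteq> T"
  shows "hom_induced p euclidean S euclidean T k x = \<one>\<^bsub>relative_homology_group p euclidean T\<^esub>"
proof -
  define Y where "Y = subtopology (euclidean :: 'b topology) T"
  have k_cont_Y: "continuous_map euclidean Y k"
    using k_cont k_range by (auto simp: Y_def continuous_map_in_subtopology continuous_map_iff_continuous)
  have id_cont: "continuous_map Y euclidean id"
    by (simp add: Y_def continuous_map_from_subtopology)
  have "hom_induced p euclidean S euclidean T (id \<circ> k)
      = hom_induced p Y T euclidean T id \<circ> hom_induced p euclidean S Y T k"
    by (rule hom_induced_compose) (use k_cont_Y id_cont k_range in auto)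
  moreover have "hom_induced p euclidean S Y T k x = \<one>\<^bsub>relative_homology_group p Y T\<^esub>"
  proof -
    have "trivial_group (relative_homology_group p Y (topspace Y))"
      by (rule trivial_relative_homology_group_topspace)
    then show ?thesis
      using hom_induced_carrier[of p euclidean S Y T k x] by (simp add: Y_def trivial_group_def)
  qed
  moreover have "hom_induced p Y T euclidean T id \<one>\<^bsub>relative_homology_group p Y T\<^esub>
      = \<one>\<^bsub>relative_homology_group p euclidean T\<^esub>"
    by (rule hom_one[OF hom_induced_hom]) (simp_all add: group.intro)
  ultimately show ?thesis by (simp add: comp_def)
qed

text \<open>The homotopy pushes \<open>k\<close> radially outwards by \<open>\<bar>R\<bar> + 1\<close>.\<close>
lemma homotopic_with_outside_push:
  fixes k :: "'a::real_normed_vector \<Rightarrow> 'b::real_normed_vector"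
  assumes k_cont: "continuous_on UNIV k" and k_nz: "\<And>w. k w \<noteq> 0"
    and k_out: "k \<in> U \<rightarrow> - cball 0 R"
  obtains k' where "continuous_on UNIV k'" and "range k' \<subseteq> - cball 0 R"
    and "homotopic_with (\<lambda>q. q \<in> U \<rightarrow> - cball 0 R) euclidean euclidean k k'"
proof -
  define a where "a = \<bar>R\<bar> + 1"
  define h where "h = (\<lambda>(t::real, w). (1 + t * a / norm (k w)) *\<^sub>R k w)"
  have norm_h: "norm (h (t, w)) = norm (k w) + t * a" if "t \<ge> 0" for t w
  proof -
    have "0 \<le> 1 + t * a / norm (k w)" using that by (simp add: a_def)
    then have "norm (h (t, w)) = (1 + t * a / norm (k w)) * norm (k w)" by (simp add: h_def)
    also have "\<dots> = norm (k w) + t * a" using k_nz[of w] by (simp add: field_simps)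
    finally show ?thesis .
  qed
  have h_cont: "continuous_on ({0..1} \<times> UNIV) h"
    unfolding h_def case_prod_unfold
    by (intro continuous_intros continuous_on_compose2[OF k_cont]) (auto simp: k_nz)
  show ?thesis
  proof (rule that)
    show "continuous_on UNIV (\<lambda>w. h (1, w))"
      using h_cont by (rule continuous_on_compose2) (auto intro!: continuous_intros)
    have far: "R < norm (h (1, w))" for w
    proof -
      have "norm (h (1, w)) = norm (k w) + a" using norm_h[of 1 w] by simp
      moreover have "R < a" by (simp add: a_def)
      ultimately show ?thesis using norm_ge_zero[of "k w"] by linarith
    qed
    show "range (\<lambda>w. h (1, w)) \<subseteq> - cball 0 R"
    proof (rule image_subsetI)
      show "h (1, w) \<in> - cball 0 R" for w using far[of w] by simp
    qed
    show "homotopic_with (\<lambda>q. q \<in> U \<rightarrow> - cball 0 R) euclidean euclidean k (\<lambda>w. h (1, w))"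
    proof (rule homotopic_with_euclideanI[OF h_cont])
      show "h (0, x) = k x" for x by (simp add: h_def)
      show "(\<lambda>x. h (t, x)) \<in> U \<rightarrow> - cball 0 R" if t: "t \<in> {0..1}" for t
      proof
        fix y assume "y \<in> U"
        then have "R < norm (k y)" using funcset_mem[OF k_out] by (simp add: not_le)
        moreover have "norm (h (t, y)) = norm (k y) + t * a" using norm_h t by simp
        moreover have "0 \<le> t * a" using t by (simp add: a_def)
        ultimately show "h (t, y) \<in> - cball 0 R" by simp
      qed
    qed simp
  qed
qed

lemma hom_induced_nonvanishing_eq_one:
  fixes k :: "'a::real_normed_vector \<Rightarrow> 'b::real_normed_vector"
  assumes "continuous_on UNIV k" and "\<And>w. k w \<noteq> 0" and "k \<in> U \<rightarrow> - cball 0 R"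
  shows "hom_induced p euclidean U euclidean (- cball 0 R) k x
         = \<one>\<^bsub>relative_homology_group p euclidean (- cball 0 R)\<^esub>"
proof -
  obtain k' where k'_cont: "continuous_on UNIV k'" and k'_range: "range k' \<subseteq> - cball 0 R"
    and homotopic: "homotopic_with (\<lambda>q. q \<in> U \<rightarrow> - cball 0 R) euclidean euclidean k k'"
    using homotopic_with_outside_push[OF assms] by blast
  from homotopic have "hom_induced p euclidean U euclidean (- cball 0 R) k
      = hom_induced p euclidean U euclidean (- cball 0 R) k'"
    by (rule homology_homotopy_axiom)
  with hom_induced_range_subset_eq_one[OF k'_cont k'_range] show ?thesis by simp
qed

lemma homotopic_with_outside_rescale:
  fixes g :: "'a::real_normed_vector \<Rightarrow> 'b::real_normed_vector"
  assumes g_cont: "continuous_on UNIV g" and g_out: "g \<in> - cball 0 S \<rightarrow> - cball 0 R"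
    and l: "1 \<le> l"
  shows "homotopic_with (\<lambda>q. q \<in> - cball 0 S \<rightarrow> - cball 0 R) euclidean euclidean
           g (\<lambda>w. g (l *\<^sub>R w))"
proof (rule homotopic_with_euclideanI[where h = "\<lambda>(t, w). g ((1 + t * (l - 1)) *\<^sub>R w)"])
  show "continuous_on ({0..1} \<times> UNIV) (\<lambda>(t, w). g ((1 + t * (l - 1)) *\<^sub>R w))"
    unfolding case_prod_unfold
    by (intro continuous_intros continuous_on_compose2[OF g_cont]) auto
  fix t :: real
  assume t: "t \<in> {0..1}"
  show "(\<lambda>w. case (t, w) of (t, w) \<Rightarrow> g ((1 + t * (l - 1)) *\<^sub>R w)) \<in> - cball 0 S \<rightarrow> - cball 0 R"
  proof
    fix y :: 'a
    assume y: "y \<in> - cball 0 S"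
    have "1 \<le> 1 + t * (l - 1)" using t l by auto
    then have "norm y \<le> norm ((1 + t * (l - 1)) *\<^sub>R y)"
      by (simp add: mult_le_cancel_right1)
    then have "(1 + t * (l - 1)) *\<^sub>R y \<in> - cball 0 S" using y by auto
    then show "(case (t, y) of (t, w) \<Rightarrow> g ((1 + t * (l - 1)) *\<^sub>R w)) \<in> - cball 0 R"
      using g_out by auto
  qed
qed simp_all

lemma homotopic_with_outside_perturb:
  fixes q1 q2 :: "'a::real_normed_vector \<Rightarrow> 'b::real_normed_vector"
  assumes "continuous_on UNIV q1" and "continuous_on UNIV q2"
    and far: "q1 \<in> U \<rightarrow> - cball 0 (R + D)" and close: "\<And>w. norm (q2 w - q1 w) \<le> D"
  shows "homotopic_with (\<lambda>q. q \<in> U \<rightarrow> - cball 0 R) euclidean euclidean q1 q2"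
proof (rule homotopic_with_euclideanI[where h = "\<lambda>(t, w). q1 w + t *\<^sub>R (q2 w - q1 w)"])
  show "continuous_on ({0..1} \<times> UNIV) (\<lambda>(t, w). q1 w + t *\<^sub>R (q2 w - q1 w))"
    unfolding case_prod_unfold
    by (intro continuous_intros continuous_on_compose2[OF assms(1)] continuous_on_compose2[OF assms(2)]) auto
  fix t :: real
  assume t: "t \<in> {0..1}"
  show "(\<lambda>w. case (t, w) of (t, w) \<Rightarrow> q1 w + t *\<^sub>R (q2 w - q1 w)) \<in> U \<rightarrow> - cball 0 R"
  proof
    fix y assume "y \<in> U"
    then have "R + D < norm (q1 y)" using funcset_mem[OF far] by (simp add: not_le)
    moreover have "norm (t *\<^sub>R (q2 y - q1 y)) \<le> D"
      using t close[of y] mult_left_le_one_le[of "norm (q2 y - q1 y)" t] by auto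
    moreover have "norm (q1 y) \<le> norm (q1 y + t *\<^sub>R (q2 y - q1 y)) + norm (t *\<^sub>R (q2 y - q1 y))"
      by (metis add_diff_cancel norm_triangle_ineq4)
    ultimately show "(case (t, y) of (t, w) \<Rightarrow> q1 w + t *\<^sub>R (q2 w - q1 w)) \<in> - cball 0 R"
      by simp
  qed
qed simp_all

lemma proper_map_rescale_outside:
  fixes g :: "'a::real_normed_vector \<Rightarrow> 'b::{real_normed_vector,heine_borel}"
  assumes "proper_map euclidean euclidean g" and "0 < S"
  obtains l where "1 \<le> l" and "(\<lambda>w. g (l *\<^sub>R w)) \<in> - cball 0 S \<rightarrow> - cball 0 R"
proof -
  have "\<forall>K. compact K \<longrightarrow> compact {x. g x \<in> K}"
    using assms(1) unfolding proper_map_alt by simp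
  from this[rule_format, OF compact_cball] have "compact {x. g x \<in> cball 0 R}" .
  then have "compact (g -` cball 0 R)" by (simp only: vimage_def)
  then have "bounded (g -` cball 0 R)" by (rule compact_imp_bounded)
  then obtain T where T: "\<And>x. x \<in> g -` cball 0 R \<Longrightarrow> norm x \<le> T"
    unfolding bounded_pos by blast
  define l where "l = max 1 (T / S)"
  have l: "1 \<le> l" by (simp add: l_def)
  have far: "T < norm (l *\<^sub>R y)" if "S < norm y" for y
  proof -
    have "T \<le> l * S" using \<open>0 < S\<close> by (simp add: l_def pos_divide_le_eq[symmetric])
    also have "\<dots> < l * norm y" using that l by (intro mult_strict_left_mono) auto
    finally show ?thesis using l by simp
  qed
  have "(\<lambda>w. g (l *\<^sub>R w)) \<in> - cball 0 S \<rightarrow> - cball 0 R"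
  proof
    fix y :: 'a
    assume "y \<in> - cball 0 S"
    then have "S < norm y" by simp
    then have "T < norm (l *\<^sub>R y)" by (rule far)
    then have "l *\<^sub>R y \<notin> g -` cball 0 R" using T not_le by blast
    then show "g (l *\<^sub>R y) \<in> - cball 0 R" by simp
  qed
  with l show ?thesis by (rule that)
qed

lemma vimage_cball_subset_radius_pos:
  fixes g :: "'a::{real_normed_vector,perfect_space} \<Rightarrow> 'b::real_normed_vector"
  assumes g_cont: "continuous_on UNIV g" and "0 < R"
    and sub: "g -` cball 0 R \<subseteq> cball 0 S" and "g w = 0"
  shows "0 < S"
proof (rule ccontr)
  assume "\<not> 0 < S"
  have "\<And>x. isCont g x" using g_cont by (simp add: continuous_on_eq_continuous_at)
  then have "open (g -` ball 0 R)" by (intro continuous_open_vimage) auto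
  moreover have "g -` ball 0 R \<subseteq> {0}"
  proof
    fix x assume "x \<in> g -` ball 0 R"
    then have "x \<in> g -` cball 0 R" by simp
    then have "norm x \<le> S" using sub by auto
    with \<open>\<not> 0 < S\<close> have "norm x \<le> 0" by linarith
    then show "x \<in> {0}" by simp
  qed
  moreover have "w \<in> g -` ball 0 R" using \<open>0 < R\<close> \<open>g w = 0\<close> by simp
  ultimately have "open {0 :: 'a}" by (metis subset_singletonD empty_iff)
  then show False by (simp add: not_open_singleton)
qed

lemma homotopic_with_outside_rescaled_perturbation:
  fixes g F :: "'a::real_normed_vector \<Rightarrow> 'b::{real_normed_vector,heine_borel}"
  assumes g_cont: "continuous_on UNIV g" and g_proper: "proper_map euclidean euclidean g"
    and g_out: "g \<in> - cball 0 S \<rightarrow> - cball 0 R" and "0 < S"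
    and F_cont: "continuous_on UNIV F" and close: "\<And>w. norm (F w - g w) \<le> D"
  obtains l where "homotopic_with (\<lambda>q. q \<in> - cball 0 S \<rightarrow> - cball 0 R) euclidean euclidean
                     g (\<lambda>w. F (l *\<^sub>R w))"
proof -
  obtain l where "1 \<le> l" and far: "(\<lambda>w. g (l *\<^sub>R w)) \<in> - cball 0 S \<rightarrow> - cball 0 (R + D)"
    using proper_map_rescale_outside[OF g_proper \<open>0 < S\<close>] by blast
  have "homotopic_with (\<lambda>q. q \<in> - cball 0 S \<rightarrow> - cball 0 R) euclidean euclidean g (\<lambda>w. g (l *\<^sub>R w))"
    using g_cont g_out \<open>1 \<le> l\<close> by (rule homotopic_with_outside_rescale)
  moreover have "homotopic_with (\<lambda>q. q \<in> - cball 0 S \<rightarrow> - cball 0 R) euclidean euclidean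
      (\<lambda>w. g (l *\<^sub>R w)) (\<lambda>w. F (l *\<^sub>R w))"
    by (rule homotopic_with_outside_perturb[OF _ _ far close])
      (intro continuous_intros continuous_on_compose2[OF g_cont] continuous_on_compose2[OF F_cont]; simp)+
  ultimately have "homotopic_with (\<lambda>q. q \<in> - cball 0 S \<rightarrow> - cball 0 R) euclidean euclidean
      g (\<lambda>w. F (l *\<^sub>R w))"
    by (rule homotopic_with_trans)
  then show ?thesis by (rule that)
qed

text \<open>The degree is invariant under the homotopy from \<open>g\<close> to a rescaled \<open>F\<close>; if \<open>F\<close> had no
  zero, the induced map would vanish.\<close>
lemma essential_perturbation_has_zero:
  fixes g F :: "real^'n \<Rightarrow> real^'n"
  assumes g_cont: "continuous_on UNIV g" and g_proper: "proper_map euclidean euclidean g"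
    and g_ess: "essential g"
    and F_cont: "continuous_on UNIV F" and close: "\<And>w. norm (F w - g w) \<le> D"
  shows "\<exists>w. F w = 0"
proof (rule ccontr)
  assume "\<not> ?thesis"
  then have F_nz: "\<And>w. F w \<noteq> 0" by auto
  let ?p = "int CARD('n)"
  from g_ess obtain R S z where "R > 0" and sub: "g -` cball 0 R \<subseteq> cball 0 S"
    and nontriv: "hom_induced ?p euclidean (- cball 0 S) euclidean (- cball 0 R) g z
       \<noteq> \<one>\<^bsub>relative_homology_group ?p euclidean (- cball 0 R)\<^esub>"
    unfolding essential_def by blast
  let ?P = "\<lambda>q. q \<in> - cball 0 S \<rightarrow> - cball 0 R"
  have g_out: "?P g" using sub by auto
  obtain k where k_cont: "continuous_on UNIV k" and k_nz: "\<And>w. k w \<noteq> 0"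
    and g_k: "homotopic_with ?P euclidean euclidean g k"
  proof (cases "0 < S")
    case False
    then have "g w \<noteq> 0" for w
      using vimage_cball_subset_radius_pos[OF g_cont \<open>R > 0\<close> sub] by blast
    moreover have "homotopic_with ?P euclidean euclidean g g"
      using g_cont g_out by (simp add: continuous_map_iff_continuous)
    ultimately show ?thesis using that g_cont by blast
  next
    case True
    then obtain l where "homotopic_with ?P euclidean euclidean g (\<lambda>w. F (l *\<^sub>R w))"
      using homotopic_with_outside_rescaled_perturbation[OF g_cont g_proper g_out _ F_cont close]
      by blast
    moreover have "continuous_on UNIV (\<lambda>w. F (l *\<^sub>R w))"
      by (intro continuous_intros continuous_on_compose2[OF F_cont]) auto
    ultimately show ?thesis using that F_nz by blast
  qed
  have "hom_induced ?p euclidean (- cball 0 S) euclidean (- cball 0 R) g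
      = hom_induced ?p euclidean (- cball 0 S) euclidean (- cball 0 R) k"
    using g_k by (rule homology_homotopy_axiom)
  moreover have "hom_induced ?p euclidean (- cball 0 S) euclidean (- cball 0 R) k z
      = \<one>\<^bsub>relative_homology_group ?p euclidean (- cball 0 R)\<^esub>"
    using k_cont k_nz conjunct2[OF homotopic_with_imp_property[OF g_k]]
    by (rule hom_induced_nonvanishing_eq_one)
  ultimately show False using nontriv by simp
qed

lemma exists_zero_of_sum:
  fixes f :: "'a::metric_space \<Rightarrow> real^'n \<Rightarrow> real^'n" and p :: "'v \<Rightarrow> 'a"
  assumes "finite W" and "W \<noteq> {}" and pW: "p ` W \<subseteq> X"
    and f_cont: "\<And>x. x \<in> X \<Longrightarrow> continuous_on UNIV (f x)"
    and f_lip: "\<And>x y w. x \<in> X \<Longrightarrow> y \<in> X \<Longrightarrow> dist (f x w) (f y w) \<le> dist x y"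
    and f_ess: "\<And>x. x \<in> X \<Longrightarrow> proper_map euclidean euclidean (f x) \<and> essential (f x)"
  shows "\<exists>w. (\<Sum>u\<in>W. f (p u) w) = 0"
proof -
  define M where "M = real (card W)"
  have "0 < M" using assms(1,2) by (simp add: M_def card_gt_0_iff)
  obtain u0 where "u0 \<in> W" using assms(2) by blast
  define x0 where "x0 = p u0"
  have x0: "x0 \<in> X" using pW \<open>u0 \<in> W\<close> by (auto simp: x0_def)
  define F where "F w = (1 / M) *\<^sub>R (\<Sum>u\<in>W. f (p u) w)" for w
  have "continuous_on UNIV F"
    unfolding F_def using pW by (intro continuous_intros f_cont) auto
  moreover have "norm (F w - f x0 w) \<le> (1 / M) * (\<Sum>u\<in>W. dist (p u) x0)" for w
  proof -
    have const: "(1 / M) *\<^sub>R (\<Sum>u\<in>W. f x0 w) = f x0 w"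
      using \<open>0 < M\<close> by (simp only: sum_constant_scaleR M_def) simp
    have "F w - f x0 w = (1 / M) *\<^sub>R (\<Sum>u\<in>W. f (p u) w - f x0 w)"
      by (simp only: F_def sum_subtractf scaleR_diff_right const)
    then have "norm (F w - f x0 w) = (1 / M) * norm (\<Sum>u\<in>W. f (p u) w - f x0 w)"
      using \<open>0 < M\<close> by simp
    also have "\<dots> \<le> (1 / M) * (\<Sum>u\<in>W. dist (p u) x0)"
      using \<open>0 < M\<close> pW f_lip[OF _ x0]
      by (intro mult_left_mono order_trans[OF norm_sum] sum_mono) (auto simp: dist_norm)
    finally show ?thesis .
  qed
  ultimately obtain w where "F w = 0"
    using essential_perturbation_has_zero f_cont[OF x0] f_ess[OF x0] by blast
  then show ?thesis using \<open>0 < M\<close> by (auto simp: F_def)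
qed

lemma expander_image_concentrates:
  fixes f :: "'a::metric_space \<Rightarrow> real^'n \<Rightarrow> real^'n" and \<xi> :: "'v \<Rightarrow> 'a"
  assumes exp: "vertex_expansion W (graph_boundary W E) c" and "W \<noteq> {}"
    and \<xi>: "\<xi> ` W \<subseteq> X" "\<And>u v. u \<in> W \<Longrightarrow> v \<in> W \<Longrightarrow> dist (\<xi> u) (\<xi> v) \<le> graph_dist W E u v"
    and f_cont: "continuous_on (X \<times> UNIV) (\<lambda>(x, w). f x w)"
    and f_lip: "\<And>w. 1-lipschitz_on X (\<lambda>x. f x w)"
    and f_ess: "\<And>x. x \<in> X \<Longrightarrow> proper_map euclidean euclidean (f x) \<and> essential (f x)"
    and diam: "\<And>w. \<forall>x\<in>X. \<forall>y\<in>X. f x w \<in> ball 0 r \<and> f y w \<in> ball 0 r \<longrightarrow> dist x y \<le> C"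
    and r: "4 * real CARD('n) * ((1 + c) / c) < r"
  obtains x where "x \<in> X" and "real (card W) / 2 < real (card {v\<in>W. \<xi> v \<in> cball x C})"
proof -
  interpret vertex_expansion W "graph_boundary W E" c by (rule exp)
  have \<xi>X: "\<xi> u \<in> X" if "u \<in> W" for u using \<xi>(1) that by auto
  have slice_cont: "continuous_on UNIV (f x)" if "x \<in> X" for x
    using continuous_on_compose2[OF f_cont continuous_on_Pair[OF continuous_on_const continuous_on_id]]
      that by auto
  have slice_lip: "dist (f x w) (f y w) \<le> dist x y" if "x \<in> X" "y \<in> X" for x y w
    using lipschitz_onD[OF f_lip that] by simp
  obtain w where sum0: "(\<Sum>v\<in>W. f (\<xi> v) w) = 0"
    using exists_zero_of_sum[OF finite_V \<open>W \<noteq> {}\<close> \<xi>(1) slice_cont slice_lip f_ess] by blast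
  have "dist (f (\<xi> u) w) (f (\<xi> v) w) \<le> graph_dist W E u v" if "u \<in> W" "v \<in> W" for u v
    using slice_lip[OF \<xi>X \<xi>X] \<xi>(2)[OF that] that order_trans by blast
  then have "boundary_lipschitz W (graph_boundary W E) (\<lambda>v. f (\<xi> v) w)"
    using finite_V by (intro boundary_lipschitz_graph_boundary)
  then have big: "real (card W) / 2 < real (card {v\<in>W. norm (f (\<xi> v) w) < r})"
    using sum0 \<open>W \<noteq> {}\<close> r by (rule card_small_norm_gt_half)
  moreover have "0 \<le> real (card W) / 2" by simp
  ultimately have "0 < card {v\<in>W. norm (f (\<xi> v) w) < r}" by linarith
  then have "{v\<in>W. norm (f (\<xi> v) w) < r} \<noteq> {}" using card_gt_0_iff by blast
  then obtain v1 where v1: "v1 \<in> W" "norm (f (\<xi> v1) w) < r" by blast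
  have "{v\<in>W. norm (f (\<xi> v) w) < r} \<subseteq> {v\<in>W. \<xi> v \<in> cball (\<xi> v1) C}"
    using diam[of w] v1 \<xi>X by auto
  then have "card {v\<in>W. norm (f (\<xi> v) w) < r} \<le> card {v\<in>W. \<xi> v \<in> cball (\<xi> v1) C}"
    using finite_V by (intro card_mono) auto
  with big have "real (card W) / 2 < real (card {v\<in>W. \<xi> v \<in> cball (\<xi> v1) C})" by linarith
  with \<xi>X[OF v1(1)] show ?thesis by (rule that)
qed

lemma eventually_lt_half_of_sublinear:
  fixes s :: "nat \<Rightarrow> nat" and \<rho> :: "real \<Rightarrow> real"
  assumes \<rho>: "((\<lambda>t. \<rho> t / t) \<longlongrightarrow> 0) at_top" and s: "filterlim s at_top sequentially"
  shows "\<forall>\<^sub>F n in sequentially. 0 < s n \<and> \<rho> (real (s n)) < real (s n) / 2"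
proof -
  have s_real: "filterlim (\<lambda>n. real (s n)) at_top sequentially"
    using filterlim_compose[OF filterlim_real_sequentially s] .
  have "((\<lambda>n. \<rho> (real (s n)) / real (s n)) \<longlongrightarrow> 0) sequentially"
    using filterlim_compose[OF \<rho> s_real] .
  then have "\<forall>\<^sub>F n in sequentially. \<rho> (real (s n)) / real (s n) < 1 / 2"
    by (rule order_tendstoD) simp
  moreover have "\<forall>\<^sub>F n in sequentially. 1 \<le> s n"
    using s by (simp add: filterlim_at_top)
  ultimately show ?thesis
    by eventually_elim (auto simp: pos_divide_less_eq)
qed

lemma coarse_quasi_embedding_sparse_ball:
  assumes "coarse_quasi_embedding V E X \<xi>" and "filterlim (\<lambda>n. card (V n)) at_top sequentially"
    and "0 < r"
  obtains n where "V n \<noteq> {}"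
    and "\<And>x. x \<in> X \<Longrightarrow> real (card {v\<in>V n. \<xi> n v \<in> ball x r}) < real (card (V n)) / 2"
proof -
  obtain \<rho> :: "real \<Rightarrow> real \<Rightarrow> real" where lim: "\<And>r. r > 0 \<Longrightarrow> ((\<lambda>t. \<rho> r t / t) \<longlongrightarrow> 0) at_top"
    and bound: "\<And>n r x. r > 0 \<Longrightarrow> x \<in> X \<Longrightarrow>
                  real (card {v\<in>V n. \<xi> n v \<in> ball x r}) < \<rho> r (real (card (V n)))"
    using assms(1) unfolding coarse_quasi_embedding_def by blast
  have "\<exists>n. 0 < card (V n) \<and> \<rho> r (real (card (V n))) < real (card (V n)) / 2"
    using eventually_lt_half_of_sublinear[OF lim[OF assms(3)] assms(2)] by (rule eventually_happens'[OF sequentially_bot])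
  then obtain n where pos: "0 < card (V n)" and sparse: "\<rho> r (real (card (V n))) < real (card (V n)) / 2"
    by (elim exE conjE)
  show ?thesis
  proof (rule that)
    show "V n \<noteq> {}" using pos by auto
    show "real (card {v\<in>V n. \<xi> n v \<in> ball x r}) < real (card (V n)) / 2" if "x \<in> X" for x
      using bound[OF assms(3) that, of n] sparse by linarith
  qed
qed

theorem lemma3:
  fixes X :: "'a::metric_space set"
    and f :: "'a \<Rightarrow> real^'n \<Rightarrow> real^'n"
    and c :: "real \<Rightarrow> real"
  assumes "bounded_geometry X"
    and "continuous_on (X \<times> UNIV) (\<lambda>(x, w). f x w)"
    and "\<And>w. 1-lipschitz_on X (\<lambda>x. f x w)"
    and "\<And>x. x \<in> X \<Longrightarrow> proper_map euclidean euclidean (f x) \<and> essential (f x)"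
    and "\<And>w r. r > 0 \<Longrightarrow> \<forall>x\<in>X. \<forall>y\<in>X. f x w \<in> ball 0 r \<and> f y w \<in> ball 0 r \<longrightarrow> dist x y \<le> c r"
  shows "\<not> (\<exists>(V :: nat \<Rightarrow> 'v set) E cc d \<xi>. expander V E cc d \<and> coarse_quasi_embedding V E X \<xi>)"
proof
  assume "\<exists>(V :: nat \<Rightarrow> 'v set) E cc d \<xi>. expander V E cc d \<and> coarse_quasi_embedding V E X \<xi>"
  then obtain V :: "nat \<Rightarrow> 'v set" and E cc d \<xi>
    where exp: "expander V E cc d" and cqe: "coarse_quasi_embedding V E X \<xi>" by blast
  define r where "r = 4 * real CARD('n) * ((1 + cc) / cc) + 1"
  have r: "4 * real CARD('n) * ((1 + cc) / cc) < r" "0 < r"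
    using exp by (simp_all add: r_def expander_def add_pos_nonneg)
  have lim: "filterlim (\<lambda>n. card (V n)) at_top sequentially" using exp by (simp add: expander_def)
  have "0 < \<bar>c r\<bar> + 1" by simp
  from coarse_quasi_embedding_sparse_ball[OF cqe lim this] obtain n where "V n \<noteq> {}" and sparse:
    "\<And>x. x \<in> X \<Longrightarrow> real (card {v\<in>V n. \<xi> n v \<in> ball x (\<bar>c r\<bar> + 1)}) < real (card (V n)) / 2" by blast
  have "\<xi> n ` V n \<subseteq> X"
    and "\<And>u v. u \<in> V n \<Longrightarrow> v \<in> V n \<Longrightarrow> dist (\<xi> n u) (\<xi> n v) \<le> graph_dist (V n) (E n) u v"
    using cqe by (auto simp: coarse_quasi_embedding_def)
  then obtain x where "x \<in> X" and crowded: "real (card (V n)) / 2 < real (card {v\<in>V n. \<xi> n v \<in> cball x (c r)})"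
    using expander_image_concentrates[OF expander_vertex_expansion[OF exp] \<open>V n \<noteq> {}\<close> _ _ assms(2-4)
        assms(5)[OF r(2)] r(1)] by blast
  have "card {v\<in>V n. \<xi> n v \<in> cball x (c r)} \<le> card {v\<in>V n. \<xi> n v \<in> ball x (\<bar>c r\<bar> + 1)}"
    using exp by (intro card_mono) (auto simp: expander_def)
  with crowded sparse[OF \<open>x \<in> X\<close>] show False by linarith
qed

end
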